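(* Let $(q_n)_{n\geqslant1}$, $q_n:[0,\infty)\to\mathbf R$, be a sequence of nondecreasing functions such that $(q_n(t))_{n\geqslant1}$ is bounded for every fixed $t\geqslant0$. Let $\tilde q(t)=\limsup_{n\to\infty}q_n(t)$ and $\alpha=\lim_{t\to\infty}\tilde q(t)$. Then for any $\beta<\alpha$ there exist a subsequence $(q_{n_k})_{k\geqslant1}$ and a nondecreasing function $q:[0,\infty)\to\mathbf R$ such that $q_{n_k}(t)\to q(t)$ as $k\to\infty$ for every $t\geqslant0$, and $\lim_{t\to\infty}q(t)>\beta$. *)

theory Defs
  imports "HOL-Analysis.Analysis"
begin

end

theory Submission
  imports Defs "HOL-Library.Diagonal_Subsequence"
begin

(*
  Since limsup q_n(T) > \<beta> for some large T, infinitely many q_n(T) exceed some \<beta>' > \<beta>; keep only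
  those n. Helly's selection theorem then yields a further subsequence converging at every t \<ge> 0:
  a diagonal argument gives convergence on the nonnegative rationals, the limsup G of that
  subsequence is monotone, monotonicity sandwiches q_n(t) between rational points and forces
  convergence to G(t) wherever G is continuous, and a second diagonal argument takes care of the
  countably many discontinuities of G. The pointwise limit Q is monotone with Q(T) \<ge> \<beta>', so its
  limit at infinity, the supremum of Q, exceeds \<beta>.
*)

lemma countable_bounded_imp_convergent_subseq:
  fixes f :: "nat \<Rightarrow> 'a \<Rightarrow> real"
  assumes "countable D" and bdd: "\<And>t. t \<in> D \<Longrightarrow> bounded (range (\<lambda>n. f n t))"
  shows "\<exists>s. strict_mono s \<and> (\<forall>t\<in>D. convergent (\<lambda>k. f (s k) t))"
proof (cases "D = {}")
  case True
  then show ?thesis using strict_mono_id by blast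
next
  case False
  define d where "d = from_nat_into D"
  have range_d: "range d = D" using range_from_nat_into[OF False \<open>countable D\<close>] d_def by simp
  interpret subseqs "\<lambda>n s. convergent (\<lambda>k. f (s k) (d n))"
  proof
    fix n and s :: "nat \<Rightarrow> nat"
    have "bounded (range (\<lambda>k. f (s k) (d n)))"
      by (rule bounded_subset[OF bdd[of "d n"]]) (use range_d in auto)
    then obtain l r where "strict_mono r" and "((\<lambda>k. f (s k) (d n)) \<circ> r) \<longlonglongrightarrow> l"
      using bounded_imp_convergent_subsequence by blast
    then show "\<exists>r. strict_mono r \<and> convergent (\<lambda>k. f ((s \<circ> r) k) (d n))"
      by (auto simp: convergent_def o_def)
  qed
  have "convergent (\<lambda>k. f (diagseq k) (d n))" for n
  proof -
    have "convergent (\<lambda>k. f ((diagseq \<circ> (+) (Suc n)) k) (d n))"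
    proof (rule diagseq_holds)
      fix r s :: "nat \<Rightarrow> nat" and n
      assume "strict_mono r" "convergent (\<lambda>k. f (s k) (d n))"
      then show "convergent (\<lambda>k. f ((s \<circ> r) k) (d n))"
        using convergent_subseq_convergent[of "\<lambda>k. f (s k) (d n)" r] by (simp add: o_def)
    qed
    then show ?thesis
      using convergent_ignore_initial_segment[of "\<lambda>k. f (diagseq k) (d n)" "Suc n"]
      by (simp add: o_def add.commute)
  qed
  then show ?thesis using subseq_diagseq range_d by blast
qed

lemma less_limsup_imp_subseq:
  fixes X :: "nat \<Rightarrow> 'a :: complete_linorder"
  assumes "a < limsup X"
  shows "\<exists>r :: nat \<Rightarrow> nat. strict_mono r \<and> (\<forall>n. a < X (r n))"
proof -
  have "frequently (\<lambda>n. a < X n) sequentially"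
  proof (rule ccontr)
    assume "\<not> frequently (\<lambda>n. a < X n) sequentially"
    then have "eventually (\<lambda>n. X n \<le> a) sequentially"
      by (simp add: not_frequently not_less)
    then have "limsup X \<le> a" by (rule Limsup_bounded)
    with assms show False by simp
  qed
  then have inf: "infinite {n. a < X n}"
    by (simp add: frequently_cofinite cofinite_eq_sequentially[symmetric])
  show ?thesis
    using strict_mono_enumerate[OF inf] enumerate_in_set[OF inf] by blast
qed

lemma mono_on_tendsto_SUP_at_top:
  fixes f :: "real \<Rightarrow> 'a :: {complete_linorder, linorder_topology}"
  assumes mono: "mono_on {a..} f"
  shows "(f \<longlongrightarrow> (SUP t\<in>{a..}. f t)) at_top"
proof (rule order_tendstoI)
  fix y assume "y < (SUP t\<in>{a..}. f t)"
  then obtain t0 where t0: "t0 \<ge> a" "y < f t0" by (auto simp: less_SUP_iff)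
  show "eventually (\<lambda>t. y < f t) at_top"
    using eventually_ge_at_top[of t0]
    by eventually_elim (use t0 mono_onD[OF mono] in \<open>fastforce intro: order.strict_trans2\<close>)
next
  fix y assume "(SUP t\<in>{a..}. f t) < y"
  then show "eventually (\<lambda>t. f t < y) at_top"
    by (intro eventually_mono[OF eventually_ge_at_top[of a]]) (meson SUP_upper atLeast_iff order.strict_trans1)
qed

lemma mono_on_pointwise_limit:
  fixes f :: "nat \<Rightarrow> 'a :: order \<Rightarrow> real"
  assumes "\<And>n. mono_on S (f n)" and "\<And>t. t \<in> S \<Longrightarrow> (\<lambda>n. f n t) \<longlonglongrightarrow> g t"
  shows "mono_on S g"
  by (rule mono_onI, rule LIMSEQ_le[OF assms(2) assms(2)]) (use assms(1) in \<open>auto dest: mono_onD\<close>)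

lemma real_limsup_eq_lim:
  fixes X :: "nat \<Rightarrow> real"
  assumes "X \<longlonglongrightarrow> l"
  shows "real_of_ereal (limsup (\<lambda>n. ereal (X n))) = l"
  using lim_imp_Limsup[OF trivial_limit_sequentially tendsto_ereal[OF assms]] by simp

lemma ereal_real_limsup_of_bounded:
  fixes X :: "nat \<Rightarrow> real"
  assumes "bounded (range X)"
  shows "ereal (real_of_ereal (limsup (\<lambda>n. ereal (X n)))) = limsup (\<lambda>n. ereal (X n))"
proof -
  obtain B where B: "\<And>n. \<bar>X n\<bar> \<le> B" using assms by (auto simp: bounded_iff)
  have "limsup (\<lambda>n. ereal (X n)) \<le> ereal B"
    by (intro Limsup_bounded always_eventually) (use B abs_le_D1 in auto)
  moreover have "ereal (-B) \<le> limsup (\<lambda>n. ereal (X n))"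
    by (intro le_Limsup always_eventually allI) (use B in \<open>auto simp: abs_le_iff minus_le_iff\<close>)
  ultimately show ?thesis by (intro ereal_real') auto
qed

lemma real_limsup_mono_on:
  fixes f :: "nat \<Rightarrow> 'a :: order \<Rightarrow> real"
  assumes mono: "\<And>n. mono_on S (f n)" and bdd: "\<And>t. t \<in> S \<Longrightarrow> bounded (range (\<lambda>n. f n t))"
  shows "mono_on S (\<lambda>t. real_of_ereal (limsup (\<lambda>n. ereal (f n t))))"
proof (rule mono_onI)
  fix x y assume xy: "x \<in> S" "y \<in> S" "x \<le> y"
  have "limsup (\<lambda>n. ereal (f n x)) \<le> limsup (\<lambda>n. ereal (f n y))"
    by (intro Limsup_mono always_eventually) (use xy mono in \<open>auto dest: mono_onD\<close>)
  then show "real_of_ereal (limsup (\<lambda>n. ereal (f n x))) \<le> real_of_ereal (limsup (\<lambda>n. ereal (f n y)))"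
    using ereal_real_limsup_of_bounded[OF bdd[OF xy(1)]] ereal_real_limsup_of_bounded[OF bdd[OF xy(2)]]
    by (metis ereal_less_eq(3))
qed

lemma mono_on_tendsto_at_continuity_point:
  fixes f :: "nat \<Rightarrow> real \<Rightarrow> real"
  assumes mono: "\<And>n. mono_on S (f n)"
    and D: "D \<subseteq> S" and lim: "\<And>d. d \<in> D \<Longrightarrow> (\<lambda>n. f n d) \<longlonglongrightarrow> G d"
    and t: "t \<in> S" and cont: "continuous (at t within S) G"
    and below: "\<And>\<delta>. \<delta> > 0 \<Longrightarrow> \<exists>d\<in>D. t - \<delta> < d \<and> d \<le> t"
    and above: "\<And>\<delta>. \<delta> > 0 \<Longrightarrow> \<exists>d\<in>D. t \<le> d \<and> d < t + \<delta>"
  shows "(\<lambda>n. f n t) \<longlonglongrightarrow> G t"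
proof -
  have G: "(G \<longlongrightarrow> G t) (at t within S)" using cont by (simp add: continuous_within)
  show ?thesis
  proof (rule order_tendstoI)
    fix a
    assume a: "a < G t"
    obtain \<delta> where "\<delta> > 0" and \<delta>: "\<And>x. x \<in> S \<Longrightarrow> dist x t < \<delta> \<Longrightarrow> a < G x"
      using order_tendstoD(1)[OF G a] a unfolding eventually_at by (metis dist_self)
    then obtain d where "d \<in> D" "t - \<delta> < d" "d \<le> t" using below by blast
    then have "eventually (\<lambda>n. a < f n d) sequentially"
      using \<delta> D by (intro order_tendstoD(1)[OF lim]) (auto simp: dist_real_def)
    moreover have "f n d \<le> f n t" for n
      using \<open>d \<in> D\<close> \<open>d \<le> t\<close> D t by (intro mono_onD[OF mono]) auto
    ultimately show "eventually (\<lambda>n. a < f n t) sequentially"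
      by (auto elim!: eventually_mono intro: order.strict_trans2)
  next
    fix a
    assume a: "G t < a"
    obtain \<delta> where "\<delta> > 0" and \<delta>: "\<And>x. x \<in> S \<Longrightarrow> dist x t < \<delta> \<Longrightarrow> G x < a"
      using order_tendstoD(2)[OF G a] a unfolding eventually_at by (metis dist_self)
    then obtain d where "d \<in> D" "t \<le> d" "d < t + \<delta>" using above by blast
    then have "eventually (\<lambda>n. f n d < a) sequentially"
      using \<delta> D by (intro order_tendstoD(2)[OF lim]) (auto simp: dist_real_def)
    moreover have "f n t \<le> f n d" for n
      using \<open>d \<in> D\<close> \<open>t \<le> d\<close> D t by (intro mono_onD[OF mono]) auto
    ultimately show "eventually (\<lambda>n. f n t < a) sequentially"
      by (auto elim!: eventually_mono intro: order.strict_trans1[rotated])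
  qed
qed

lemma helly_selection_mono_on_nonneg:
  fixes f :: "nat \<Rightarrow> real \<Rightarrow> real"
  assumes mono: "\<And>n. mono_on {0..} (f n)"
    and bdd: "\<And>t. t \<ge> 0 \<Longrightarrow> bounded (range (\<lambda>n. f n t))"
  shows "\<exists>s. strict_mono s \<and> (\<forall>t\<ge>0. convergent (\<lambda>k. f (s k) t))"
proof -
  have bdd_subseq: "bounded (range (\<lambda>k. f (s k) t))" if "t \<ge> 0" for s t
    by (rule bounded_subset[OF bdd[OF that]]) auto
  define D :: "real set" where "D = {d \<in> \<rat>. 0 \<le> d}"
  have "countable D" unfolding D_def by (rule countable_subset[OF _ countable_rat]) auto
  then obtain s1 where s1: "strict_mono s1" and conv_D: "\<forall>d\<in>D. convergent (\<lambda>k. f (s1 k) d)"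
    using countable_bounded_imp_convergent_subseq[of D f] bdd by (auto simp: D_def)
  define G where "G t = real_of_ereal (limsup (\<lambda>k. ereal (f (s1 k) t)))" for t
  have "mono_on {0..} G"
    unfolding G_def by (rule real_limsup_mono_on) (use mono bdd_subseq in auto)
  have lim_D: "(\<lambda>k. f (s1 k) d) \<longlonglongrightarrow> G d" if "d \<in> D" for d
  proof -
    obtain l where "(\<lambda>k. f (s1 k) d) \<longlonglongrightarrow> l" using conv_D \<open>d \<in> D\<close> by (auto simp: convergent_def)
    then show ?thesis using real_limsup_eq_lim by (simp add: G_def)
  qed
  define J where "J = {t \<in> {0..}. \<not> continuous (at t within {0..}) G}"
  have "countable J" unfolding J_def by (rule mono_on_ctble_discont[OF \<open>mono_on {0..} G\<close>])
  then obtain s2 where s2: "strict_mono s2" and conv_J: "\<forall>t\<in>J. convergent (\<lambda>k. f (s1 (s2 k)) t)"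
    using countable_bounded_imp_convergent_subseq[of J "\<lambda>k. f (s1 k)"] bdd_subseq
    by (auto simp: J_def)
  have "convergent (\<lambda>k. f (s1 (s2 k)) t)" if "t \<ge> 0" for t
  proof (cases "t \<in> J")
    case True
    then show ?thesis using conv_J by blast
  next
    case False
    have "(\<lambda>k. f (s1 k) t) \<longlonglongrightarrow> G t"
    proof (rule mono_on_tendsto_at_continuity_point[where f = "\<lambda>k. f (s1 k)" and S = "{0..}" and D = D])
      show "continuous (at t within {0..}) G" using False that by (simp add: J_def)
      show "\<exists>d\<in>D. t - \<delta> < d \<and> d \<le> t" if "\<delta> > 0" for \<delta>
      proof -
        obtain r where "r \<in> \<rat>" "t - \<delta> < r" "r < t" using Rats_dense_in_real[of "t - \<delta>" t] \<open>\<delta> > 0\<close> by auto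
        then show ?thesis using \<open>t \<ge> 0\<close> by (intro bexI[of _ "max 0 r"]) (auto simp: D_def max_def)
      qed
      show "\<exists>d\<in>D. t \<le> d \<and> d < t + \<delta>" if "\<delta> > 0" for \<delta>
      proof -
        obtain r where "r \<in> \<rat>" "t < r" "r < t + \<delta>" using Rats_dense_in_real[of t "t + \<delta>"] \<open>\<delta> > 0\<close> by auto
        then show ?thesis using \<open>t \<ge> 0\<close> by (auto simp: D_def)
      qed
    qed (use mono lim_D that in \<open>auto simp: D_def\<close>)
    then have "((\<lambda>k. f (s1 k) t) \<circ> s2) \<longlonglongrightarrow> G t" by (rule LIMSEQ_subseq_LIMSEQ[OF _ s2])
    then show ?thesis by (auto simp: convergent_def o_def)
  qed
  then show ?thesis using strict_mono_o[OF s1 s2] by (auto simp: o_def)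
qed

theorem lemma2p3:
  fixes q :: "nat \<Rightarrow> real \<Rightarrow> real" and \<alpha> :: ereal and \<beta> :: real
  assumes mono: "\<And>n. mono_on {0..} (q n)"
    and bdd: "\<And>t. t \<ge> 0 \<Longrightarrow> bounded (range (\<lambda>n. q n t))"
    and alpha: "((\<lambda>t. limsup (\<lambda>n. ereal (q n t))) \<longlongrightarrow> \<alpha>) at_top"
    and beta: "ereal \<beta> < \<alpha>"
  shows "\<exists>r :: nat \<Rightarrow> nat. strict_mono r \<and>
           (\<exists>Q :: real \<Rightarrow> real. mono_on {0..} Q \<and>
              (\<forall>t\<ge>0. (\<lambda>k. q (r k) t) \<longlonglongrightarrow> Q t) \<and>
              (\<exists>L :: ereal. ((\<lambda>t. ereal (Q t)) \<longlongrightarrow> L) at_top \<and> L > ereal \<beta>))"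
proof -
  obtain T where "T \<ge> 0" and "ereal \<beta> < limsup (\<lambda>n. ereal (q n T))"
    using eventually_happens[OF eventually_conj[OF eventually_ge_at_top[of 0]
          order_tendstoD(1)[OF alpha beta]]]
    by auto
  then obtain \<beta>' where "\<beta> < \<beta>'" and "ereal \<beta>' < limsup (\<lambda>n. ereal (q n T))"
    using ereal_dense2 by fastforce
  then obtain r0 :: "nat \<Rightarrow> nat" where r0: "strict_mono r0" and above: "\<And>n. \<beta>' < q (r0 n) T"
    using less_limsup_imp_subseq by fastforce
  have "bounded (range (\<lambda>n. q (r0 n) t))" if "t \<ge> 0" for t
    by (rule bounded_subset[OF bdd[OF that]]) auto
  then obtain s where s: "strict_mono s" and conv: "\<forall>t\<ge>0. convergent (\<lambda>k. q (r0 (s k)) t)"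
    using helly_selection_mono_on_nonneg[of "\<lambda>n. q (r0 n)"] mono by blast
  define Q where "Q t = lim (\<lambda>k. q (r0 (s k)) t)" for t
  have lim: "\<forall>t\<ge>0. (\<lambda>k. q (r0 (s k)) t) \<longlonglongrightarrow> Q t"
    using conv by (simp add: Q_def convergent_LIMSEQ_iff)
  have "mono_on {0..} Q" by (rule mono_on_pointwise_limit) (use mono lim in auto)
  then have "((\<lambda>t. ereal (Q t)) \<longlongrightarrow> (SUP t\<in>{0..}. ereal (Q t))) at_top"
    by (intro mono_on_tendsto_SUP_at_top) (simp add: mono_on_def)
  moreover have "\<beta>' \<le> Q T"
    by (rule LIMSEQ_le_const[OF lim[rule_format, OF \<open>T \<ge> 0\<close>]]) (use above less_imp_le in blast)
  then have "ereal \<beta> < (SUP t\<in>{0..}. ereal (Q t))"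
    using \<open>\<beta> < \<beta>'\<close> \<open>T \<ge> 0\<close> by (intro less_SUP_iff[THEN iffD2] bexI[of _ T]) auto
  ultimately show ?thesis
    using strict_mono_o[OF r0 s] \<open>mono_on {0..} Q\<close> lim by (auto simp: o_def)
qed

end
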